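(* Let $X$ be a subshift with HB diagram $\mathcal D$. If $\alpha_0\to\alpha_1\to\dots\to\alpha_{n-1}$ and $\beta_0\to\beta_1\to\dots\to\beta_{n-1}$ are two paths of length $n$ on $\mathcal D$ with $\alpha_0$ and $\beta_0$ blocks of length $1$, then $\hat\pi(\alpha_0\alpha_1\dots\alpha_{n-1})=\hat\pi(\beta_0\beta_1\dots\beta_{n-1})$ if and only if $\alpha_i=\beta_i$ for all $0\le i\le n-1$.
   Context: Let $\mathcal A$ be a finite alphabet and $\sigma$ the shift, $(\sigma x)_i=x_{i+1}$. A one-sided subshift is a nonempty closed $\sigma$-invariant $X^+\subseteq\mathcal A^{\mathbb N}$; its natural extension is $\tilde X=\{x\in\mathcal A^{\mathbb Z}: x_px_{p+1}\dots\in X^+ \text{ for all } p\in\mathbb Z\}$. For a two-sided subshift $X$, $X^+$ is the set of right rays of points of $X$, so $\tilde X=X$. $\mathcal L(\tilde X)$ is the set of finite blocks occurring in $\tilde X$. For $a_{-n}\dots a_0\in\mathcal L(\tilde X)$, $\mathrm{fol}(a_{-n}\dots a_0)=\{b_0b_1\dots\in X^+:\exists b\in\tilde X \text{ with } b_{-n}\dots b_0=a_{-n}\dots a_0\}$. A block $a_{-n}\dots a_0\in\mathcal L(\tilde X)$ with $n\ge1$ is significant if $\mathrm{fol}(a_{-n}\dots a_0)\subsetneq\mathrm{fol}(a_{-n+1}\dots a_0)$; single symbols in $\mathcal L(\tilde X)$ are also counted as significant. $\mathrm{sig}(a_{-n}\dots a_0)$ is the longest significant suffix. The HB diagram $\mathcal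 D$ has vertex set the significant blocks and an arrow $\alpha\to\beta$ iff there is a symbol $b$ with $\alpha b\in\mathcal L(\tilde X)$ and $\beta=\mathrm{sig}(\alpha b)$. The length of a path is its number of vertices; $\hat\pi(\alpha_0\dots\alpha_{k})=a_0\dots a_k$ where $a_i$ is the last symbol of $\alpha_i$. *)

theory Defs
  imports "HOL-Analysis.Analysis"
begin

text \<open>Alphabet: a finite type 'a. One-sided sequences: nat \<Rightarrow> 'a; two-sided: int \<Rightarrow> 'a.
  Blocks are nonempty lists; a block w = a_{-n} ... a_0 is the list [a_{-n}, ..., a_0].\<close>

definition shift :: "(nat \<Rightarrow> 'a) \<Rightarrow> nat \<Rightarrow> 'a" where
  "shift x = (\<lambda>i. x (Suc i))"

definition seq_topology :: "(nat \<Rightarrow> 'a) topology" where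
  "seq_topology = product_topology (\<lambda>_. discrete_topology UNIV) UNIV"

definition one_sided_subshift :: "(nat \<Rightarrow> 'a::finite) set \<Rightarrow> bool" where
  "one_sided_subshift Xp \<longleftrightarrow> Xp \<noteq> {} \<and> closedin seq_topology Xp \<and> shift ` Xp \<subseteq> Xp"

definition nat_ext :: "(nat \<Rightarrow> 'a) set \<Rightarrow> (int \<Rightarrow> 'a) set" where
  "nat_ext Xp = {x. \<forall>p::int. (\<lambda>i::nat. x (p + int i)) \<in> Xp}"

definition lang :: "(nat \<Rightarrow> 'a) set \<Rightarrow> 'a list set" where
  "lang Xp = {w. w \<noteq> [] \<and> (\<exists>x \<in> nat_ext Xp. \<exists>p::int.
                  w = map (\<lambda>i. x (p + int i)) [0..<length w])}"

text \<open>fol(a_{-n}...a_0): right rays b_0 b_1 ... of points b of the natural extension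
  with b_{-n}...b_0 = a_{-n}...a_0.\<close>
definition fol :: "(nat \<Rightarrow> 'a) set \<Rightarrow> 'a list \<Rightarrow> (nat \<Rightarrow> 'a) set" where
  "fol Xp w = {(\<lambda>k::nat. b (int k)) | b. b \<in> nat_ext Xp \<and>
                 (\<forall>i < length w. b (int i - int (length w - 1)) = w ! i)}"

definition significant :: "(nat \<Rightarrow> 'a) set \<Rightarrow> 'a list \<Rightarrow> bool" where
  "significant Xp w \<longleftrightarrow> w \<in> lang Xp \<and>
     (length w = 1 \<or> (length w \<ge> 2 \<and> fol Xp w \<subset> fol Xp (tl w)))"

text \<open>Longest significant suffix (suffixes are drop k w, k < length w).\<close>
definition sig :: "(nat \<Rightarrow> 'a) set \<Rightarrow> 'a list \<Rightarrow> 'a list" where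
  "sig Xp w = drop (LEAST k. significant Xp (drop k w)) w"

definition hb_arrow :: "(nat \<Rightarrow> 'a) set \<Rightarrow> 'a list \<Rightarrow> 'a list \<Rightarrow> bool" where
  "hb_arrow Xp \<alpha> \<beta> \<longleftrightarrow> significant Xp \<alpha> \<and> significant Xp \<beta> \<and>
     (\<exists>b. \<alpha> @ [b] \<in> lang Xp \<and> \<beta> = sig Xp (\<alpha> @ [b]))"

text \<open>A path on the HB diagram, given as its list of vertices (its length = number of vertices).\<close>
definition hb_path :: "(nat \<Rightarrow> 'a) set \<Rightarrow> 'a list list \<Rightarrow> bool" where
  "hb_path Xp ps \<longleftrightarrow> ps \<noteq> [] \<and> (\<forall>\<alpha> \<in> set ps. significant Xp \<alpha>) \<and>
     (\<forall>i. Suc i < length ps \<longrightarrow> hb_arrow Xp (ps ! i) (ps ! Suc i))"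

definition pi_hat :: "'a list list \<Rightarrow> 'a list" where
  "pi_hat ps = map last ps"

end

theory Submission
  imports Defs
begin

text \<open>A path on the HB diagram is determined by its initial vertex and its label: the target of an
  arrow \<open>\<alpha> \<rightarrow> sig (\<alpha> b)\<close> is a suffix of \<open>\<alpha> b\<close>, so it ends in \<open>b\<close>, and hence \<open>\<alpha>\<close> together with the
  last symbol of the target recovers the target. An initial vertex of length one is its own label.
  No property of the subshift is needed.\<close>

lemma last_sig:
  assumes "significant Xp (sig Xp w)"
  shows "last (sig Xp w) = last w"
proof -
  have "sig Xp w \<noteq> []" using assms unfolding significant_def lang_def by auto
  moreover obtain k where "sig Xp w = drop k w" unfolding sig_def by blast
  ultimately show ?thesis by (simp add: last_drop)
qed

lemma hb_arrow_target_eqI: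
  assumes "hb_arrow Xp \<alpha> \<beta>" and "hb_arrow Xp \<alpha> \<beta>'" and "last \<beta> = last \<beta>'"
  shows "\<beta> = \<beta>'"
proof -
  obtain b where b: "\<beta> = sig Xp (\<alpha> @ [b])" and "significant Xp \<beta>"
    using assms(1) unfolding hb_arrow_def by blast
  then have "last \<beta> = b" using last_sig[of Xp "\<alpha> @ [b]"] by simp
  obtain b' where b': "\<beta>' = sig Xp (\<alpha> @ [b'])" and "significant Xp \<beta>'"
    using assms(2) unfolding hb_arrow_def by blast
  then have "last \<beta>' = b'" using last_sig[of Xp "\<alpha> @ [b']"] by simp
  show ?thesis using b b' \<open>last \<beta> = b\<close> \<open>last \<beta>' = b'\<close> assms(3) by simp
qed

lemma hb_path_eqI:
  assumes "hb_path Xp \<alpha>s" and "hb_path Xp \<beta>s" and "length \<alpha>s = length \<beta>s"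
    and "hd \<alpha>s = hd \<beta>s" and "pi_hat \<alpha>s = pi_hat \<beta>s"
  shows "\<alpha>s = \<beta>s"
proof (rule nth_equalityI)
  show "length \<alpha>s = length \<beta>s" by fact
  have last_eq: "last (\<alpha>s ! i) = last (\<beta>s ! i)" if "i < length \<alpha>s" for i
    using assms(3,5) that unfolding pi_hat_def by (metis nth_map)
  fix i assume "i < length \<alpha>s"
  then show "\<alpha>s ! i = \<beta>s ! i"
  proof (induction i)
    case 0
    then show ?case using assms(3,4) by (metis hd_conv_nth length_greater_0_conv)
  next
    case (Suc i)
    then have "hb_arrow Xp (\<alpha>s ! i) (\<alpha>s ! Suc i)" "hb_arrow Xp (\<alpha>s ! i) (\<beta>s ! Suc i)"
      using assms(1-3) unfolding hb_path_def by auto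
    then show ?case using hb_arrow_target_eqI last_eq[OF Suc.prems] by blast
  qed
qed

theorem theorem5p3:
  fixes Xp :: "(nat \<Rightarrow> 'a::finite) set"
    and \<alpha>s \<beta>s :: "'a list list"
  assumes "one_sided_subshift Xp"
    and "hb_path Xp \<alpha>s" and "hb_path Xp \<beta>s"
    and "length \<alpha>s = n" and "length \<beta>s = n"
    and "length (hd \<alpha>s) = 1" and "length (hd \<beta>s) = 1"
  shows "pi_hat \<alpha>s = pi_hat \<beta>s \<longleftrightarrow> (\<forall>i < n. \<alpha>s ! i = \<beta>s ! i)"
proof
  assume labels: "pi_hat \<alpha>s = pi_hat \<beta>s"
  have "\<alpha>s \<noteq> []" "\<beta>s \<noteq> []" using assms(2,3) unfolding hb_path_def by auto
  then have "last (hd \<alpha>s) = last (hd \<beta>s)"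
    using labels unfolding pi_hat_def by (metis list.map_sel(1))
  then have "hd \<alpha>s = hd \<beta>s"
    using assms(6,7) by (metis One_nat_def length_0_conv length_Suc_conv last_ConsL)
  then have "\<alpha>s = \<beta>s" using hb_path_eqI[OF assms(2,3)] assms(4,5) labels by simp
  then show "\<forall>i < n. \<alpha>s ! i = \<beta>s ! i" by simp
next
  assume "\<forall>i < n. \<alpha>s ! i = \<beta>s ! i"
  then have "\<alpha>s = \<beta>s" using assms(4,5) by (simp add: nth_equalityI)
  then show "pi_hat \<alpha>s = pi_hat \<beta>s" by simp
qed

end
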